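(* For $\mathbf k\in\mathbb Z^{r'}_{++}$, $\mathbf l\in\mathbb Z^{r''}_{++}$ let $$C_0^d(\lambda,\mathbf k,\mathbf l)=\frac{\prod_{i=1}^{r'}\prod_{j=1}^{r''}(\lambda-\frac d2(i+j-1))_{k_i+l_j}}{\prod_{i=1}^{r'+1}\prod_{j=1}^{r''+1}(\lambda-\frac d2(i+j-2))_{k_i+l_j}},\qquad \phi_0(\mathbf k,\mathbf l)_a=\min\{k_i+l_j:1\le i\le r'+1,1\le j\le r''+1,i+j=a+1\}$$ ($1\le a\le r'+r''$, $k_{r'+1}=l_{r''+1}=0$). Let $1\le m_1'\le m_2'\le r'$ and $1\le m_1''\le m_2''\le r''$ with $k_1=\dots=k_{m_1'}$, $l_1=\dots=l_{m_1''}$ and $k_{m_2'+1}=l_{m_2''+1}=0$. Then the set of $\lambda\in\mathbb C$ where $(\lambda)_{\phi_0(\mathbf k,\mathbf l),d}C_0^d(\lambda,\mathbf k,\mathbf l)=0$ is contained in the real interval $$\Bigl[\tfrac d2\max\{m_1',m_1''\}-(k_1+l_1)+1,\ \tfrac d2(m_2'+m_2''-1)-\max\{k_{m_2'},l_{m_2''}\}\Bigr]$$ if $k_1l_1\ge1$, and is empty if $k_1l_1=0$. In particular, for $m=1,\dots,r'+r''-1$, if $\phi_0(\mathbf k,\mathbf l)_{m+1}=0$ and $\phi_0(\mathbf k,\mathbf l)_m\ne0$ (with $\phi_0(\mathbf k,\mathbf l)_{r'+r''+1}:=0$), then $C_0^d(\lambda,\mathbf k,\mathbf l)$ is holomorphic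 and non-zero at $\lambda=\frac d2 m$ and has a pole at $\lambda=\frac d2(m-1)$.
   Context: $r',r''\ge1$ are integers, $d>0$ is a real number, $\mathbb Z^s_{++}=\{\mathbf m\in\mathbb Z^s:m_1\ge\cdots\ge m_s\ge0\}$, $(a)_m=a(a+1)\cdots(a+m-1)$, and $(\lambda)_{\mathbf m,d}=\prod_{j=1}^{s}(\lambda-\frac d2(j-1))_{m_j}$ for $\mathbf m\in\mathbb Z^s_{\ge0}$. The product $(\lambda)_{\phi_0,d}C_0^d$ is an entire (polynomial) function of $\lambda$. *)

theory Defs
  imports "HOL-Complex_Analysis.Complex_Analysis"
begin

(* Vectors k in Z^{r}_{++} are represented as functions k :: nat => nat, indexed from 1,
   with k i = 0 for i > r (this encodes the convention k_{r+1} = 0). *)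

definition poch_d :: "real \<Rightarrow> nat \<Rightarrow> (nat \<Rightarrow> nat) \<Rightarrow> complex \<Rightarrow> complex" where
  "poch_d d s m lam =
     (\<Prod>j\<in>{1..s}. pochhammer (lam - of_real (d / 2 * of_nat (j - 1))) (m j))"

definition C0 :: "real \<Rightarrow> nat \<Rightarrow> nat \<Rightarrow> (nat \<Rightarrow> nat) \<Rightarrow> (nat \<Rightarrow> nat) \<Rightarrow> complex \<Rightarrow> complex" where
  "C0 d r1 r2 k l lam =
     (\<Prod>i\<in>{1..r1}. \<Prod>j\<in>{1..r2}.
        pochhammer (lam - of_real (d / 2 * of_nat (i + j - 1))) (k i + l j))
   / (\<Prod>i\<in>{1..r1+1}. \<Prod>j\<in>{1..r2+1}.
        pochhammer (lam - of_real (d / 2 * of_nat (i + j - 2))) (k i + l j))"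

definition phi0 :: "nat \<Rightarrow> nat \<Rightarrow> (nat \<Rightarrow> nat) \<Rightarrow> (nat \<Rightarrow> nat) \<Rightarrow> nat \<Rightarrow> nat" where
  "phi0 r1 r2 k l a =
     Min {k i + l j | i j. 1 \<le> i \<and> i \<le> r1 + 1 \<and> 1 \<le> j \<and> j \<le> r2 + 1 \<and> i + j = a + 1}"

(* The entire function (lam)_{phi_0(k,l),d} C_0^d(lam,k,l) (away from its removable
   singularities; its value at any point is its limit there). *)
definition PC0 :: "real \<Rightarrow> nat \<Rightarrow> nat \<Rightarrow> (nat \<Rightarrow> nat) \<Rightarrow> (nat \<Rightarrow> nat) \<Rightarrow> complex \<Rightarrow> complex" where
  "PC0 d r1 r2 k l lam = poch_d d (r1 + r2) (phi0 r1 r2 k l) lam * C0 d r1 r2 k l lam"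

end

theory Submission
  imports Defs
begin

text \<open>
  Group the factors of numerator and denominator of C0 along antidiagonals: the numerator
  factors with i + j = s and the denominator factors with i + j = s + 1 share the shift
  d/2 (s - 1), and the denominator diagonal has one entry more. Remove from it an entry of
  minimal exponent, which is phi0(k,l)_s, and pair the remaining entries order-preservingly
  with the numerator ones. As k and l are non-increasing, every numerator exponent n dominates
  the exponent a of its partner, so (x)_n = (x)_a (x + a)_(n-a) cancels the partner. Hence
  (lambda)_(phi0,d) C0 = Q off finitely many points, with Q a product of Pochhammer polynomials.
  A leftover factor (x + a)_(n-a) is non-trivial only where k or l drops; this confines its
  roots to the stated interval, and leaves no roots at all when k_1 l_1 = 0. If phi0 drops to 0
  after index m, then m is the sum of the lengths of k and l, so Q has no roots above
  d/2 (m - 1) - 1, while (lambda)_(phi0,d) vanishes at d/2 (m - 1) but not at d/2 m.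
\<close>

lemma prod_prod_eq_prod_antidiagonals:
  fixes g :: "nat \<Rightarrow> nat \<Rightarrow> 'a::comm_monoid_mult"
  shows "(\<Prod>i\<in>{1..a}. \<Prod>j\<in>{1..b}. g i j) =
         (\<Prod>s\<in>{1..a+b+1}. \<Prod>i\<in>{max 1 (s-b)..min a (s-1)}. g i (s-i))"
proof -
  have "(\<Prod>i\<in>{1..a}. \<Prod>j\<in>{1..b}. g i j) = (\<Prod>(i,j)\<in>{1..a}\<times>{1..b}. g i j)"
    by (rule prod.cartesian_product)
  also have "\<dots> = (\<Prod>(s,i)\<in>Sigma {1..a+b+1} (\<lambda>s. {max 1 (s-b)..min a (s-1)}). g i (s-i))"
    by (rule prod.reindex_bij_witness[of _ "\<lambda>(s,i). (i, s-i)" "\<lambda>(i,j). (i+j, i)"]) auto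
  also have "\<dots> = (\<Prod>s\<in>{1..a+b+1}. \<Prod>i\<in>{max 1 (s-b)..min a (s-1)}. g i (s-i))"
    by (rule prod.Sigma[symmetric]) auto
  finally show ?thesis .
qed

lemma prod_prod_eq_prod_antidiagonals_Suc:
  fixes g :: "nat \<Rightarrow> nat \<Rightarrow> 'a::comm_monoid_mult"
  shows "(\<Prod>i\<in>{1..a+1}. \<Prod>j\<in>{1..b+1}. g i j) =
         (\<Prod>s\<in>{1..a+b+1}. \<Prod>i\<in>{max 1 (s-b)..min (a+1) s}. g i (Suc s-i))"
proof -
  have "(\<Prod>i\<in>{1..a+1}. \<Prod>j\<in>{1..b+1}. g i j) = (\<Prod>(i,j)\<in>{1..a+1}\<times>{1..b+1}. g i j)"
    by (rule prod.cartesian_product)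
  also have "\<dots> = (\<Prod>(s,i)\<in>Sigma {1..a+b+1} (\<lambda>s. {max 1 (s-b)..min (a+1) s}). g i (Suc s-i))"
    by (rule prod.reindex_bij_witness[of _ "\<lambda>(s,i). (i, Suc s-i)" "\<lambda>(i,j). (i+j-1, i)"]) auto
  also have "\<dots> = (\<Prod>s\<in>{1..a+b+1}. \<Prod>i\<in>{max 1 (s-b)..min (a+1) s}. g i (Suc s-i))"
    by (rule prod.Sigma[symmetric]) auto
  finally show ?thesis .
qed

lemma prod_atLeastAtMost_Suc_extract:
  fixes g :: "nat \<Rightarrow> 'a::comm_monoid_mult"
  assumes "lo \<le> i0" "i0 \<le> Suc hi"
  shows "(\<Prod>i\<in>{lo..Suc hi}. g i) = g i0 * (\<Prod>i\<in>{lo..hi}. g (if i < i0 then i else Suc i))"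
proof -
  have "(\<Prod>i\<in>{lo..Suc hi}. g i) = g i0 * (\<Prod>i\<in>{lo..Suc hi}-{i0}. g i)"
    using assms by (subst prod.remove[of _ i0]) auto
  also have "(\<Prod>i\<in>{lo..Suc hi}-{i0}. g i) = (\<Prod>i\<in>{lo..hi}. g (if i < i0 then i else Suc i))"
    by (rule prod.reindex_bij_witness[of _ "\<lambda>i. if i < i0 then i else Suc i"
          "\<lambda>j. if j < i0 then j else j - 1"]) (use assms in auto)
  finally show ?thesis .
qed

lemma ex_last_nonzero:
  fixes f :: "nat \<Rightarrow> nat"
  assumes "f 1 \<noteq> 0" "1 \<le> r" "\<forall>i>r. f i = 0"
  obtains p where "1 \<le> p" "p \<le> r" "f p \<noteq> 0" "f (p+1) = 0"
proof -
  define S where "S = {i\<in>{1..r}. f i \<noteq> 0}"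
  have fin: "finite S" and one: "1 \<in> S" using assms by (auto simp: S_def)
  define p where "p = Max S"
  have pS: "p \<in> S" unfolding p_def using fin one by (intro Max_in) auto
  have "f (p+1) = 0"
  proof (cases "p + 1 \<le> r")
    case True
    have "p + 1 \<notin> S" using Max_ge[OF fin, of "p+1"] by (auto simp: p_def)
    then show ?thesis using True by (auto simp: S_def)
  qed (use assms(3) in auto)
  with pS that show ?thesis by (auto simp: S_def)
qed

lemma finite_pochhammer_zeros: "finite {x :: complex. pochhammer (x - c) n = 0}"
proof (rule finite_subset)
  show "{x. pochhammer (x - c) n = 0} \<subseteq> (\<lambda>t. c - of_nat t) ` {..<n}"
    by (force simp: pochhammer_eq_0_iff algebra_simps)
qed simp

lemma poch_d_analytic: "poch_d d s m analytic_on A"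
proof -
  have "(\<lambda>x. poch_d d s m x) holomorphic_on UNIV"
    unfolding poch_d_def by (intro holomorphic_intros)
  then show ?thesis using analytic_on_open[OF open_UNIV] analytic_on_subset by blast
qed

lemma poch_d_eq_0_at_shift:
  assumes "1 \<le> j" "j \<le> s" "m j \<noteq> 0"
  shows "poch_d d s m (of_real (d / 2 * (real j - 1))) = 0"
proof -
  have "pochhammer (of_real (d / 2 * (real j - 1)) - of_real (d / 2 * of_nat (j - 1)) :: complex)
          (m j) = 0"
    using assms by (simp add: pochhammer_0_left of_nat_diff)
  then show ?thesis
    unfolding poch_d_def prod_zero_iff[OF finite_atLeastAtMost]
    using assms by (intro bexI[of _ j]) auto
qed

lemma poch_d_nonzero_at_shift:
  assumes "d > 0" and "\<forall>j\<in>{n<..s}. m j = 0"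
  shows "poch_d d s m (of_real (d / 2 * real n)) \<noteq> 0"
  unfolding poch_d_def prod_zero_iff[OF finite_atLeastAtMost]
proof
  assume "\<exists>j\<in>{1..s}. pochhammer (complex_of_real (d / 2 * real n) - of_real (d / 2 * of_nat (j - 1)))
          (m j) = 0"
  then obtain j t where j: "j \<in> {1..s}" "t < m j"
    and "complex_of_real (d / 2 * real n) - of_real (d / 2 * of_nat (j - 1)) = - of_nat t"
    by (auto simp: pochhammer_eq_0_iff)
  then have "complex_of_real (d / 2 * real n - d / 2 * real (j - 1)) = complex_of_real (- real t)"
    by simp
  then have "d / 2 * real n - d / 2 * real (j - 1) = - real t"
    by (simp only: of_real_eq_iff)
  moreover have "j \<le> n" using assms(2) j by (cases "j \<le> n") auto
  then have "d / 2 * real (j - 1) < d / 2 * real n"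
    using assms(1) j by (intro mult_strict_left_mono) auto
  ultimately show False by simp
qed

locale C0_data =
  fixes d :: real and r1 r2 :: nat and k l :: "nat \<Rightarrow> nat"
  assumes d_pos: "d > 0"
    and r1: "r1 \<ge> 1" and r2: "r2 \<ge> 1"
    and k_mono: "\<forall>i j. 1 \<le> i \<and> i \<le> j \<and> j \<le> r1 \<longrightarrow> k j \<le> k i"
    and l_mono: "\<forall>i j. 1 \<le> i \<and> i \<le> j \<and> j \<le> r2 \<longrightarrow> l j \<le> l i"
    and k_ext: "\<forall>i>r1. k i = 0"
    and l_ext: "\<forall>j>r2. l j = 0"
begin

lemma k_antimono: "1 \<le> i \<Longrightarrow> i \<le> j \<Longrightarrow> k j \<le> k i"
  using k_mono k_ext by (cases "j \<le> r1") auto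

lemma l_antimono: "1 \<le> i \<Longrightarrow> i \<le> j \<Longrightarrow> l j \<le> l i"
  using l_mono l_ext by (cases "j \<le> r2") auto

definition C0_num :: "complex \<Rightarrow> complex" where
  "C0_num x = (\<Prod>i\<in>{1..r1}. \<Prod>j\<in>{1..r2}.
      pochhammer (x - of_real (d / 2 * of_nat (i + j - 1))) (k i + l j))"

definition C0_den :: "complex \<Rightarrow> complex" where
  "C0_den x = (\<Prod>i\<in>{1..r1+1}. \<Prod>j\<in>{1..r2+1}.
      pochhammer (x - of_real (d / 2 * of_nat (i + j - 2))) (k i + l j))"

lemma C0_eq_num_div_den: "C0 d r1 r2 k l x = C0_num x / C0_den x"
  unfolding C0_def C0_num_def C0_den_def ..

text \<open>
  On diagonal \<open>s \<in> {1..r1+r2+1}\<close> the numerator factors are indexed by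
  \<open>i \<in> {diag_lo s..diag_hi s}\<close>, with \<open>j = s - i\<close>, and the denominator factors by
  \<open>i \<in> {diag_lo s..Suc (diag_hi s)}\<close>, with \<open>j = s + 1 - i\<close>.
\<close>

definition diag_lo :: "nat \<Rightarrow> nat" where "diag_lo s = max 1 (s - r2)"
definition diag_hi :: "nat \<Rightarrow> nat" where "diag_hi s = min r1 (s - 1)"
definition num_exp :: "nat \<Rightarrow> nat \<Rightarrow> nat" where "num_exp s i = k i + l (s - i)"
definition den_exp :: "nat \<Rightarrow> nat \<Rightarrow> nat" where "den_exp s i = k i + l (Suc s - i)"
definition shift :: "nat \<Rightarrow> real" where "shift s = d / 2 * real (s - 1)"

definition min_index :: "nat \<Rightarrow> nat" where
  "min_index s = (LEAST i. i \<in> {diag_lo s..Suc (diag_hi s)} \<and>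
     den_exp s i = Min (den_exp s ` {diag_lo s..Suc (diag_hi s)}))"

definition partner :: "nat \<Rightarrow> nat \<Rightarrow> nat" where
  "partner s i = (if i < min_index s then i else Suc i)"

definition common_part :: "complex \<Rightarrow> complex" where
  "common_part x = (\<Prod>s\<in>{1..r1+r2+1}. \<Prod>i\<in>{diag_lo s..diag_hi s}.
     pochhammer (x - of_real (shift s)) (den_exp s (partner s i)))"

definition excess_factor :: "nat \<Rightarrow> nat \<Rightarrow> complex \<Rightarrow> complex" where
  "excess_factor s i x = pochhammer (x - of_real (shift s) + of_nat (den_exp s (partner s i)))
     (num_exp s i - den_exp s (partner s i))"

definition PC0_poly :: "complex \<Rightarrow> complex" where
  "PC0_poly x = (\<Prod>s\<in>{1..r1+r2+1}. \<Prod>i\<in>{diag_lo s..diag_hi s}. excess_factor s i x)"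

lemma diag_nonempty: "1 \<le> s \<Longrightarrow> s \<le> r1+r2+1 \<Longrightarrow> diag_lo s \<le> Suc (diag_hi s)"
  unfolding diag_lo_def diag_hi_def by auto

lemma num_diag_facts:
  assumes "1 \<le> s" "s \<le> r1+r2+1" "i \<in> {diag_lo s..diag_hi s}"
  shows "1 \<le> i" "i \<le> r1" "1 \<le> s - i" "s - i \<le> r2" "i + (s - i) = s" "Suc s - i = Suc (s - i)"
  using assms by (auto simp: diag_lo_def diag_hi_def)

lemma min_index_spec:
  assumes "1 \<le> s" "s \<le> r1+r2+1"
  shows "min_index s \<in> {diag_lo s..Suc (diag_hi s)} \<and>
         den_exp s (min_index s) = Min (den_exp s ` {diag_lo s..Suc (diag_hi s)})"
proof -
  let ?D = "{diag_lo s..Suc (diag_hi s)}"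
  have "Min (den_exp s ` ?D) \<in> den_exp s ` ?D"
    using diag_nonempty[OF assms] by (intro Min_in) auto
  then obtain j where "j \<in> ?D" "den_exp s j = Min (den_exp s ` ?D)" by auto
  then show ?thesis unfolding min_index_def by (rule LeastI[of _ j, OF conjI])
qed

lemma min_index_mem:
  "1 \<le> s \<Longrightarrow> s \<le> r1+r2+1 \<Longrightarrow> min_index s \<in> {diag_lo s..Suc (diag_hi s)}"
  using min_index_spec by blast

lemma den_exp_min_index_le:
  assumes "1 \<le> s" "s \<le> r1+r2+1" "i \<in> {diag_lo s..Suc (diag_hi s)}"
  shows "den_exp s (min_index s) \<le> den_exp s i"
  using min_index_spec[OF assms(1,2)] assms(3) by simp

lemma den_exp_min_index_less:
  assumes "1 \<le> s" "s \<le> r1+r2+1" "i \<in> {diag_lo s..Suc (diag_hi s)}" "i < min_index s"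
  shows "den_exp s (min_index s) < den_exp s i"
proof -
  have "\<not> (i \<in> {diag_lo s..Suc (diag_hi s)} \<and>
            den_exp s i = Min (den_exp s ` {diag_lo s..Suc (diag_hi s)}))"
    using not_less_Least[OF assms(4)[unfolded min_index_def]] .
  then show ?thesis
    using min_index_spec[OF assms(1,2)] den_exp_min_index_le[OF assms(1-3)] assms(3)
    by (auto simp: order_less_le)
qed

lemma min_index_facts:
  assumes "1 \<le> s" "s \<le> r1+r2+1"
  shows "1 \<le> min_index s" "min_index s \<le> s" "1 \<le> Suc s - min_index s"
  using min_index_mem[OF assms] assms by (auto simp: diag_lo_def diag_hi_def)

lemma den_exp_partner_le_num_exp:
  assumes "1 \<le> s" "s \<le> r1+r2+1" "i \<in> {diag_lo s..diag_hi s}"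
  shows "den_exp s (partner s i) \<le> num_exp s i"
proof (cases "i < min_index s")
  case True
  have "l (Suc s - i) \<le> l (s - i)" using num_diag_facts[OF assms] by (intro l_antimono) auto
  then show ?thesis using True by (simp add: partner_def den_exp_def num_exp_def)
next
  case False
  have "k (Suc i) \<le> k i" using num_diag_facts[OF assms] by (intro k_antimono) auto
  then show ?thesis using False by (simp add: partner_def den_exp_def num_exp_def)
qed

lemma C0_num_eq: "C0_num x = common_part x * PC0_poly x"
proof -
  have "C0_num x = (\<Prod>s\<in>{1..r1+r2+1}. \<Prod>i\<in>{max 1 (s-r2)..min r1 (s-1)}.
        pochhammer (x - of_real (d / 2 * of_nat (i + (s-i) - 1))) (k i + l (s-i)))"
    unfolding C0_num_def by (rule prod_prod_eq_prod_antidiagonals)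
  also have "\<dots> = (\<Prod>s\<in>{1..r1+r2+1}. \<Prod>i\<in>{diag_lo s..diag_hi s}.
        pochhammer (x - of_real (shift s)) (den_exp s (partner s i)) * excess_factor s i x)"
  proof (rule prod.cong[OF refl], rule prod.cong)
    fix s i assume s: "s \<in> {1..r1+r2+1}" and i: "i \<in> {diag_lo s..diag_hi s}"
    have "i + (s - i) - 1 = s - 1" using i by (auto simp: diag_hi_def)
    then show "pochhammer (x - of_real (d / 2 * of_nat (i + (s-i) - 1))) (k i + l (s-i)) =
          pochhammer (x - of_real (shift s)) (den_exp s (partner s i)) * excess_factor s i x"
      using pochhammer_product[OF den_exp_partner_le_num_exp[of s i], of "x - of_real (shift s)"] s i
      by (simp add: num_exp_def excess_factor_def shift_def)
  qed (simp add: diag_lo_def diag_hi_def)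
  also have "\<dots> = common_part x * PC0_poly x"
    unfolding common_part_def PC0_poly_def by (simp add: prod.distrib)
  finally show ?thesis .
qed

lemma phi0_eq_Min_den_exp:
  assumes "1 \<le> s" "s \<le> r1+r2+1"
  shows "phi0 r1 r2 k l s = Min (den_exp s ` {diag_lo s..Suc (diag_hi s)})"
proof -
  have "{k i + l j | i j. 1 \<le> i \<and> i \<le> r1 + 1 \<and> 1 \<le> j \<and> j \<le> r2 + 1 \<and> i + j = s + 1}
        = den_exp s ` {diag_lo s..Suc (diag_hi s)}"
  proof (intro set_eqI iffI)
    fix x assume "x \<in> {k i + l j | i j. 1 \<le> i \<and> i \<le> r1 + 1 \<and> 1 \<le> j \<and> j \<le> r2 + 1 \<and> i + j = s + 1}"
    then obtain i j where ij: "x = k i + l j" "1 \<le> i" "i \<le> r1 + 1" "1 \<le> j" "j \<le> r2 + 1"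
      "i + j = s + 1" by blast
    then have "j = Suc s - i" "i \<in> {diag_lo s..Suc (diag_hi s)}"
      by (auto simp: diag_lo_def diag_hi_def)
    with ij(1) show "x \<in> den_exp s ` {diag_lo s..Suc (diag_hi s)}" unfolding den_exp_def by blast
  next
    fix x assume "x \<in> den_exp s ` {diag_lo s..Suc (diag_hi s)}"
    then obtain i where i: "i \<in> {diag_lo s..Suc (diag_hi s)}" "x = k i + l (Suc s - i)"
      by (auto simp: den_exp_def)
    then have "1 \<le> i" "i \<le> r1+1" "1 \<le> Suc s - i" "Suc s - i \<le> r2+1" "i + (Suc s - i) = s+1"
      using assms by (auto simp: diag_lo_def diag_hi_def)
    with i(2) show "x \<in> {k i + l j | i j. 1 \<le> i \<and> i \<le> r1 + 1 \<and> 1 \<le> j \<and> j \<le> r2 + 1 \<and> i + j = s + 1}"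
      by blast
  qed
  then show ?thesis unfolding phi0_def by simp
qed

lemma den_exp_min_index_eq_phi0:
  "1 \<le> s \<Longrightarrow> s \<le> r1+r2+1 \<Longrightarrow> den_exp s (min_index s) = phi0 r1 r2 k l s"
  using phi0_eq_Min_den_exp min_index_spec by simp

lemma phi0_le_den_exp:
  assumes "1 \<le> s" "s \<le> r1+r2+1" "i \<in> {diag_lo s..Suc (diag_hi s)}"
  shows "phi0 r1 r2 k l s \<le> den_exp s i"
  using den_exp_min_index_le[OF assms] den_exp_min_index_eq_phi0[OF assms(1,2)] by simp

lemma phi0_eq_0_obtain:
  assumes "1 \<le> s" "s \<le> r1+r2+1" "phi0 r1 r2 k l s = 0"
  obtains i where "i \<in> {diag_lo s..Suc (diag_hi s)}" "k i = 0" "l (Suc s - i) = 0"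
  using min_index_mem[OF assms(1,2)] den_exp_min_index_eq_phi0[OF assms(1,2)] assms(3) that
  by (auto simp: den_exp_def)

text \<open>The last diagonal \<open>s = r1 + r2 + 1\<close> contributes the trivial factor
  \<open>(x - shift s)\<^sub>0\<close>, as \<open>k (r1 + 1) = l (r2 + 1) = 0\<close>.\<close>

lemma prod_min_factors_eq_poch_d:
  "(\<Prod>s\<in>{1..r1+r2+1}. pochhammer (x - of_real (shift s)) (den_exp s (min_index s)))
   = poch_d d (r1 + r2) (phi0 r1 r2 k l) x"
proof -
  let ?s = "r1+r2+1"
  have "r1 + 1 \<in> {diag_lo ?s..Suc (diag_hi ?s)}" by (auto simp: diag_lo_def diag_hi_def)
  then have "den_exp ?s (min_index ?s) \<le> den_exp ?s (r1+1)" by (intro den_exp_min_index_le) auto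
  moreover have "den_exp ?s (r1+1) = 0" using k_ext l_ext by (simp add: den_exp_def)
  ultimately have "den_exp ?s (min_index ?s) = 0" by simp
  then have "(\<Prod>s\<in>{1..?s}. pochhammer (x - of_real (shift s)) (den_exp s (min_index s)))
      = (\<Prod>s\<in>{1..r1+r2}. pochhammer (x - of_real (shift s)) (den_exp s (min_index s)))"
    by (simp add: prod.cl_ivl_Suc)
  also have "\<dots> = poch_d d (r1 + r2) (phi0 r1 r2 k l) x"
    unfolding poch_d_def
    by (rule prod.cong[OF refl]) (simp add: den_exp_min_index_eq_phi0 shift_def)
  finally show ?thesis .
qed

lemma C0_den_eq_prod_diagonals:
  "C0_den x = (\<Prod>s\<in>{1..r1+r2+1}. \<Prod>i\<in>{diag_lo s..Suc (diag_hi s)}.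
                 pochhammer (x - of_real (shift s)) (den_exp s i))"
proof -
  have "C0_den x = (\<Prod>s\<in>{1..r1+r2+1}. \<Prod>i\<in>{max 1 (s-r2)..min (r1+1) s}.
        pochhammer (x - of_real (d / 2 * of_nat (i + (Suc s-i) - 2))) (k i + l (Suc s-i)))"
    unfolding C0_den_def by (rule prod_prod_eq_prod_antidiagonals_Suc)
  also have "\<dots> = (\<Prod>s\<in>{1..r1+r2+1}. \<Prod>i\<in>{diag_lo s..Suc (diag_hi s)}.
                 pochhammer (x - of_real (shift s)) (den_exp s i))"
  proof (rule prod.cong[OF refl], rule prod.cong)
    fix s i assume "s \<in> {1..r1+r2+1}" "i \<in> {diag_lo s..Suc (diag_hi s)}"
    then have "i + (Suc s - i) - 2 = s - 1" by (auto simp: diag_hi_def)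
    then show "pochhammer (x - of_real (d / 2 * of_nat (i + (Suc s-i) - 2))) (k i + l (Suc s-i))
            = pochhammer (x - of_real (shift s)) (den_exp s i)"
      by (simp add: shift_def den_exp_def)
  qed (auto simp: diag_lo_def diag_hi_def)
  finally show ?thesis .
qed

lemma C0_den_eq: "C0_den x = poch_d d (r1 + r2) (phi0 r1 r2 k l) x * common_part x"
proof -
  have "C0_den x = (\<Prod>s\<in>{1..r1+r2+1}.
          pochhammer (x - of_real (shift s)) (den_exp s (min_index s)) *
          (\<Prod>i\<in>{diag_lo s..diag_hi s}. pochhammer (x - of_real (shift s)) (den_exp s (partner s i))))"
    unfolding C0_den_eq_prod_diagonals
  proof (rule prod.cong[OF refl])
    fix s assume "s \<in> {1..r1+r2+1}"
    then show "(\<Prod>i\<in>{diag_lo s..Suc (diag_hi s)}. pochhammer (x - of_real (shift s)) (den_exp s i))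
      = pochhammer (x - of_real (shift s)) (den_exp s (min_index s)) *
        (\<Prod>i\<in>{diag_lo s..diag_hi s}. pochhammer (x - of_real (shift s)) (den_exp s (partner s i)))"
      using min_index_mem[of s] unfolding partner_def
      by (subst prod_atLeastAtMost_Suc_extract[of _ "min_index s"]) (auto simp: if_distrib)
  qed
  also have "\<dots> = poch_d d (r1 + r2) (phi0 r1 r2 k l) x * common_part x"
    unfolding common_part_def prod_min_factors_eq_poch_d[symmetric] by (simp add: prod.distrib)
  finally show ?thesis .
qed

lemma finite_C0_den_zeros: "finite {x. C0_den x = 0}"
proof -
  have "{x. C0_den x = 0} = (\<Union>i\<in>{1..r1+1}. \<Union>j\<in>{1..r2+1}.
          {x. pochhammer (x - of_real (d / 2 * of_nat (i + j - 2))) (k i + l j) = 0})"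
    unfolding C0_den_def
    by (simp only: set_eq_iff mem_Collect_eq UN_iff prod_zero_iff[OF finite_atLeastAtMost]) blast
  then show ?thesis by (simp add: finite_pochhammer_zeros)
qed

lemma eventually_C0_den_nonzero: "eventually (\<lambda>x. C0_den x \<noteq> 0) (at z)"
  using islimpt_finite[OF finite_C0_den_zeros, of z] unfolding islimpt_iff_eventually by auto

lemma eventually_PC0_eq_PC0_poly: "eventually (\<lambda>x. PC0 d r1 r2 k l x = PC0_poly x) (at z)"
  using eventually_C0_den_nonzero
  by (rule eventually_mono) (simp add: PC0_def C0_eq_num_div_den C0_num_eq C0_den_eq)

lemma eventually_C0_eq_quotient:
  "eventually (\<lambda>x. C0 d r1 r2 k l x = PC0_poly x / poch_d d (r1 + r2) (phi0 r1 r2 k l) x) (at z)"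
  using eventually_C0_den_nonzero
  by (rule eventually_mono) (simp add: C0_eq_num_div_den C0_num_eq C0_den_eq)

lemma PC0_poly_analytic: "PC0_poly analytic_on S"
proof -
  have "(\<lambda>x. PC0_poly x) holomorphic_on UNIV"
    unfolding PC0_poly_def excess_factor_def by (intro holomorphic_intros)
  then show ?thesis using analytic_on_open[OF open_UNIV] analytic_on_subset by blast
qed

lemma PC0_poly_tendsto: "(PC0_poly \<longlongrightarrow> PC0_poly z) (at z)"
  using analytic_at_imp_isCont[OF PC0_poly_analytic] by (simp add: isCont_def)

lemma PC0_tendsto_0_imp_PC0_poly_eq_0:
  assumes "(PC0 d r1 r2 k l \<longlongrightarrow> 0) (at z)"
  shows "PC0_poly z = 0"
proof -
  have "(PC0_poly \<longlongrightarrow> 0) (at z)"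
    using assms tendsto_cong[OF eventually_PC0_eq_PC0_poly] by simp
  then show ?thesis using tendsto_unique[OF at_neq_bot PC0_poly_tendsto] by simp
qed

lemma PC0_poly_eq_0_obtain:
  assumes "PC0_poly z = 0"
  obtains s i t where "s \<in> {1..r1+r2+1}" "i \<in> {diag_lo s..diag_hi s}"
    "t < num_exp s i - den_exp s (partner s i)"
    "z = complex_of_real (shift s - real (den_exp s (partner s i)) - real t)"
proof -
  have "\<exists>s\<in>{1..r1+r2+1}. \<exists>i\<in>{diag_lo s..diag_hi s}. excess_factor s i z = 0"
    using assms unfolding PC0_poly_def by (simp only: prod_zero_iff[OF finite_atLeastAtMost])
  then obtain s i where si: "s \<in> {1..r1+r2+1}" "i \<in> {diag_lo s..diag_hi s}" "excess_factor s i z = 0"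
    by blast
  then obtain t where "t < num_exp s i - den_exp s (partner s i)"
     "z - of_real (shift s) + of_nat (den_exp s (partner s i)) = - of_nat t"
    unfolding excess_factor_def by (auto simp: pochhammer_eq_0_iff)
  moreover from this(2) have "z = complex_of_real (shift s - real (den_exp s (partner s i)) - real t)"
    by (simp add: algebra_simps)
  ultimately show ?thesis using si that by blast
qed

lemma min_index_le_diag_lo:
  assumes "1 \<le> s" "s \<le> r1+r2+1"
    and "\<forall>i'\<in>{diag_lo s..Suc (diag_hi s)}. den_exp s (diag_lo s) \<le> den_exp s i'"
  shows "min_index s \<le> diag_lo s"
proof (rule ccontr)
  assume "\<not> min_index s \<le> diag_lo s"
  then have "den_exp s (min_index s) < den_exp s (diag_lo s)"
    using den_exp_min_index_less[OF assms(1,2), of "diag_lo s"] diag_nonempty[OF assms(1,2)] by auto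
  moreover have "den_exp s (diag_lo s) \<le> den_exp s (min_index s)"
    using assms(3) min_index_mem[OF assms(1,2)] by blast
  ultimately show False by simp
qed

lemma k_Suc_eq_beyond_min_index:
  assumes "1 \<le> s" "s \<le> r1+r2+1" "\<forall>i'\<in>{diag_lo s..Suc (diag_hi s)}. l (Suc s - i') = c"
    and "min_index s \<le> i" "i \<le> diag_hi s"
  shows "k (Suc i) = k i"
proof -
  have "Suc (diag_hi s) \<in> {diag_lo s..Suc (diag_hi s)}" using diag_nonempty[OF assms(1,2)] by auto
  from den_exp_min_index_le[OF assms(1,2) this] have "den_exp s (min_index s) \<le> den_exp s (Suc (diag_hi s))" .
  moreover have "l (Suc s - min_index s) = c" using assms(3) min_index_mem[OF assms(1,2)] by blast
  moreover have "l (Suc s - Suc (diag_hi s)) = c" using assms(3) \<open>Suc (diag_hi s) \<in> _\<close> by blast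
  ultimately have a: "k (min_index s) \<le> k (Suc (diag_hi s))" by (simp add: den_exp_def)
  have "1 \<le> min_index s" using min_index_facts[OF assms(1,2)] by simp
  have b: "k (Suc (diag_hi s)) \<le> k (Suc i)" using assms(5) by (intro k_antimono) auto
  have c: "k (Suc i) \<le> k i" using \<open>1 \<le> min_index s\<close> assms(4) by (intro k_antimono) auto
  have e: "k i \<le> k (min_index s)" using \<open>1 \<le> min_index s\<close> assms(4) by (intro k_antimono) auto
  show ?thesis using a b c e by simp
qed

lemma no_excess_if_k_const:
  assumes s: "1 \<le> s" "s \<le> r1+r2+1" and i: "i \<in> {diag_lo s..diag_hi s}"
    and k_const: "\<forall>p\<in>{1..s}. k p = c"
  shows "num_exp s i \<le> den_exp s (partner s i)"
proof -
  have "\<forall>i'\<in>{diag_lo s..Suc (diag_hi s)}. den_exp s (diag_lo s) \<le> den_exp s i'"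
  proof
    fix i' assume "i' \<in> {diag_lo s..Suc (diag_hi s)}"
    then have "1 \<le> diag_lo s" "diag_lo s \<le> i'" "i' \<le> s" using s by (auto simp: diag_lo_def diag_hi_def)
    then have "l (Suc s - diag_lo s) \<le> l (Suc s - i')" "k (diag_lo s) = k i'"
      using k_const by (auto intro!: l_antimono)
    then show "den_exp s (diag_lo s) \<le> den_exp s i'" by (simp add: den_exp_def)
  qed
  from min_index_le_diag_lo[OF s this] have "partner s i = Suc i"
    using i by (auto simp: partner_def)
  moreover have "k (Suc i) = k i" using k_const num_diag_facts[OF s i] by auto
  ultimately show ?thesis using num_diag_facts[OF s i] by (simp add: den_exp_def num_exp_def)
qed

lemma no_excess_if_l_const:
  assumes s: "1 \<le> s" "s \<le> r1+r2+1" and i: "i \<in> {diag_lo s..diag_hi s}"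
    and l_const: "\<forall>p\<in>{1..s}. l p = c"
  shows "num_exp s i \<le> den_exp s (partner s i)"
proof (cases "i < min_index s")
  case True
  have "l (s - i) = c" "l (Suc s - i) = c"
    using l_const num_diag_facts[OF s i] by auto
  then show ?thesis using True by (simp add: partner_def den_exp_def num_exp_def)
next
  case False
  have "\<forall>i'\<in>{diag_lo s..Suc (diag_hi s)}. l (Suc s - i') = c"
  proof
    fix i' assume "i' \<in> {diag_lo s..Suc (diag_hi s)}"
    then have "Suc s - i' \<in> {1..s}" using s by (auto simp: diag_lo_def diag_hi_def)
    then show "l (Suc s - i') = c" using l_const by blast
  qed
  from k_Suc_eq_beyond_min_index[OF s this] False i have "k (Suc i) = k i" by auto
  then show ?thesis using False num_diag_facts[OF s i] by (simp add: partner_def den_exp_def num_exp_def)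
qed

lemma excess_lower_bound:
  assumes s: "1 \<le> s" "s \<le> r1+r2+1" and i: "i \<in> {diag_lo s..diag_hi s}"
    and excess: "den_exp s (partner s i) < num_exp s i"
    and m1: "\<forall>i\<in>{1..m1'}. k i = k 1" "\<forall>j\<in>{1..m1''}. l j = l 1"
  shows "d / 2 * real (max m1' m1'') - real (k 1 + l 1) \<le> shift s - real (num_exp s i)"
proof -
  have "max m1' m1'' \<le> s - 1"
  proof (rule ccontr)
    assume "\<not> max m1' m1'' \<le> s - 1"
    then have "s \<le> m1' \<or> s \<le> m1''" by auto
    then show False
    proof
      assume "s \<le> m1'"
      then have "\<forall>p\<in>{1..s}. k p = k 1" using m1(1) by (meson atLeastAtMost_iff order_trans)
      from no_excess_if_k_const[OF s i this] excess show False by simp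
    next
      assume "s \<le> m1''"
      then have "\<forall>p\<in>{1..s}. l p = l 1" using m1(2) by (meson atLeastAtMost_iff order_trans)
      from no_excess_if_l_const[OF s i this] excess show False by simp
    qed
  qed
  then have "d / 2 * real (max m1' m1'') \<le> d / 2 * real (s - 1)"
    using d_pos by (intro mult_left_mono) auto
  moreover have "k i \<le> k 1" "l (s - i) \<le> l 1"
    using num_diag_facts[OF s i] by (simp_all add: k_antimono l_antimono)
  then have "real (num_exp s i) \<le> real (k 1 + l 1)" by (simp add: num_exp_def)
  ultimately show ?thesis unfolding shift_def by simp
qed

lemma no_excess_if_k1_l1_0:
  assumes s: "1 \<le> s" "s \<le> r1+r2+1" and i: "i \<in> {diag_lo s..diag_hi s}" and "k 1 * l 1 = 0"
  shows "num_exp s i \<le> den_exp s (partner s i)"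
proof (cases "k 1 = 0")
  case True
  then have "\<forall>p\<in>{1..s}. k p = 0" using k_antimono[of 1] by (simp add: le_zero_eq)
  then show ?thesis by (rule no_excess_if_k_const[OF s i])
next
  case False
  then have "l 1 = 0" using \<open>k 1 * l 1 = 0\<close> by simp
  then have "\<forall>p\<in>{1..s}. l p = 0" using l_antimono[of 1] by (simp add: le_zero_eq)
  then show ?thesis by (rule no_excess_if_l_const[OF s i])
qed

text \<open>An excess factor on diagonal \<open>s\<close> at position \<open>i\<close> (with \<open>j = s - i\<close>) comes from a
  drop \<open>l (j + 1) < l j\<close> when \<open>i\<close> lies before the removed index, and from a drop
  \<open>k (i + 1) < k i\<close> otherwise; minimality of the removed entry then bounds \<open>i\<close> and \<open>j\<close>.\<close>

lemma excess_upper_bound_before_min_index: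
  assumes s: "1 \<le> s" "s \<le> r1+r2+1" and i: "i \<in> {diag_lo s..diag_hi s}" "i < min_index s"
    and excess: "den_exp s (partner s i) < num_exp s i"
    and m2: "k (m2'+1) = 0" "l (m2''+1) = 0"
  shows "s \<le> m2' + m2'' \<and> max (k m2') (l m2'') \<le> den_exp s (partner s i)"
proof -
  define j where "j = s - i"
  have j: "1 \<le> j" "i + j = s" "Suc s - i = Suc j" using num_diag_facts[OF s i(1)] by (auto simp: j_def)
  have partner: "den_exp s (partner s i) = k i + l (Suc j)"
    using i j by (simp add: partner_def den_exp_def)
  have "l (Suc j) < l j" using excess partner by (simp add: num_exp_def j_def)
  then have jm: "j \<le> m2''" using l_antimono[of "m2''+1" j] m2 by (cases "m2'' < j") auto
  have "den_exp s (min_index s) < den_exp s i"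
    using den_exp_min_index_less[OF s _ i(2)] i(1) by auto
  moreover have "l j \<le> l (Suc s - min_index s)"
    using min_index_facts[OF s] i j by (intro l_antimono) auto
  ultimately have below: "k (min_index s) + l j < k i + l (Suc j)"
    using j by (simp add: den_exp_def)
  have "i \<le> m2'"
  proof (rule ccontr)
    assume "\<not> i \<le> m2'"
    then have "k i = 0" using k_antimono[of "m2'+1" i] m2 by auto
    moreover have "l (Suc j) \<le> l j" using j by (intro l_antimono) auto
    ultimately show False using below by simp
  qed
  then have "k m2' \<le> k i" using num_diag_facts[OF s i(1)] by (intro k_antimono) auto
  moreover have "l m2'' \<le> k i + l (Suc j)"
  proof (cases "Suc j \<le> m2''")
    case True
    then show ?thesis using l_antimono[of "Suc j" m2''] by simp
  next
    case False
    then have "j = m2''" using jm by simp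
    then show ?thesis using below by simp
  qed
  ultimately show ?thesis using \<open>i \<le> m2'\<close> jm j partner by simp
qed

lemma excess_upper_bound_from_min_index:
  assumes s: "1 \<le> s" "s \<le> r1+r2+1" and i: "i \<in> {diag_lo s..diag_hi s}" "\<not> i < min_index s"
    and excess: "den_exp s (partner s i) < num_exp s i"
    and m2: "k (m2'+1) = 0" "l (m2''+1) = 0"
  shows "s \<le> m2' + m2'' \<and> max (k m2') (l m2'') \<le> den_exp s (partner s i)"
proof -
  define j where "j = s - i"
  have j: "1 \<le> j" "i + j = s" "Suc s - Suc i = j" using num_diag_facts[OF s i(1)] by (auto simp: j_def)
  have partner: "den_exp s (partner s i) = k (Suc i) + l j"
    using i j by (simp add: partner_def den_exp_def)
  have drop: "k (Suc i) < k i" using excess partner by (simp add: num_exp_def j_def)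
  then have im: "i \<le> m2'" using k_antimono[of "m2'+1" i] m2 by (cases "m2' < i") auto
  have "den_exp s (min_index s) \<le> den_exp s (Suc i)"
    using den_exp_min_index_le[OF s] i(1) by auto
  moreover have "k i \<le> k (min_index s)"
    using min_index_facts[OF s] i by (intro k_antimono) auto
  ultimately have above: "k i + l (Suc s - min_index s) \<le> k (Suc i) + l j"
    using j by (simp add: den_exp_def)
  have jm: "j \<le> m2''"
  proof (rule ccontr)
    assume "\<not> j \<le> m2''"
    then have "l j = 0" using l_antimono[of "m2''+1" j] m2 by auto
    then show False using above drop by simp
  qed
  then have "l m2'' \<le> l j" using j by (intro l_antimono) auto
  moreover have "k m2' \<le> k (Suc i) + l j"
  proof (cases "Suc i \<le> m2'")
    case False
    then have "i = m2'" using im by simp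
    then show ?thesis using above by simp
  qed (use k_antimono[of "Suc i" m2'] in simp)
  ultimately show ?thesis using im jm j partner by simp
qed

lemma excess_upper_bound:
  assumes "1 \<le> s" "s \<le> r1+r2+1" "i \<in> {diag_lo s..diag_hi s}"
    and "den_exp s (partner s i) < num_exp s i"
    and "k (m2'+1) = 0" "l (m2''+1) = 0"
  shows "s \<le> m2' + m2'' \<and> max (k m2') (l m2'') \<le> den_exp s (partner s i)"
  using excess_upper_bound_before_min_index[OF assms(1-3) _ assms(4-6)]
    excess_upper_bound_from_min_index[OF assms(1-3) _ assms(4-6)] by blast

lemma PC0_poly_nonzero_if_k1_l1_0: "k 1 * l 1 = 0 \<Longrightarrow> PC0_poly z \<noteq> 0"
proof
  assume z: "k 1 * l 1 = 0" and "PC0_poly z = 0"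
  obtain s i t where "s \<in> {1..r1+r2+1}" "i \<in> {diag_lo s..diag_hi s}"
    "t < num_exp s i - den_exp s (partner s i)"
    "z = complex_of_real (shift s - real (den_exp s (partner s i)) - real t)"
    by (rule PC0_poly_eq_0_obtain[OF \<open>PC0_poly z = 0\<close>])
  then show False using no_excess_if_k1_l1_0[of s i] z by auto
qed

lemma PC0_poly_zero_in_interval:
  assumes "PC0_poly z = 0"
    and m1: "\<forall>i\<in>{1..m1'}. k i = k 1" "\<forall>j\<in>{1..m1''}. l j = l 1"
    and m2: "k (m2' + 1) = 0" "l (m2'' + 1) = 0"
  shows "z \<in> complex_of_real ` {d / 2 * real (max m1' m1'') - real (k 1 + l 1) + 1 ..
                              d / 2 * (real (m2' + m2'') - 1) - real (max (k m2') (l m2''))}"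
proof -
  obtain s i t where si: "s \<in> {1..r1+r2+1}" "i \<in> {diag_lo s..diag_hi s}"
    and t: "t < num_exp s i - den_exp s (partner s i)"
    and zt: "z = complex_of_real (shift s - real (den_exp s (partner s i)) - real t)"
    by (rule PC0_poly_eq_0_obtain[OF assms(1)])
  have s: "1 \<le> s" "s \<le> r1+r2+1" using si by auto
  have excess: "den_exp s (partner s i) < num_exp s i" using t by simp
  note lb = excess_lower_bound[OF s si(2) excess m1]
  have ub1: "s \<le> m2' + m2''" and ub2: "max (k m2') (l m2'') \<le> den_exp s (partner s i)"
    using excess_upper_bound[OF s si(2) excess m2] by auto
  have "real t + 1 \<le> real (num_exp s i) - real (den_exp s (partner s i))" using t excess by linarith
  moreover have "d / 2 * real (s - 1) \<le> d / 2 * (real (m2' + m2'') - 1)"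
    using ub1 s d_pos by (intro mult_left_mono) auto
  moreover have "real (max (k m2') (l m2'')) \<le> real (den_exp s (partner s i))" using ub2 by linarith
  ultimately show ?thesis unfolding zt using lb by (intro imageI) (auto simp: shift_def)
qed

lemma phi0_eq_0_Suc:
  assumes "1 \<le> s" "s + 1 \<le> r1+r2+1" "phi0 r1 r2 k l s = 0"
  shows "phi0 r1 r2 k l (s+1) = 0"
proof -
  have s: "1 \<le> s" "s \<le> r1+r2+1" and s1: "1 \<le> s+1" "s+1 \<le> r1+r2+1" using assms by auto
  obtain i where i: "i \<in> {diag_lo s..Suc (diag_hi s)}" and ki: "k i = 0" and li: "l (Suc s - i) = 0"
    using phi0_eq_0_obtain[OF s assms(3)] .
  have i1: "1 \<le> i" "i \<le> s" "s - r2 \<le> i" "i \<le> r1 + 1" using i s by (auto simp: diag_lo_def diag_hi_def)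
  show ?thesis
  proof (cases "s + 1 - r2 \<le> i")
    case True
    have "i \<in> {diag_lo (s+1)..Suc (diag_hi (s+1))}" using True i1 by (auto simp: diag_lo_def diag_hi_def)
    moreover have "l (Suc (s+1) - i) \<le> l (Suc s - i)" using i1 by (intro l_antimono) auto
    ultimately show ?thesis using phi0_le_den_exp[OF s1] ki li by (fastforce simp: den_exp_def)
  next
    case False
    have "Suc i \<in> {diag_lo (s+1)..Suc (diag_hi (s+1))}"
      using False i1 assms by (auto simp: diag_lo_def diag_hi_def)
    moreover have "k (Suc i) \<le> k i" using i1 by (intro k_antimono) auto
    moreover have "Suc (s+1) - Suc i = Suc s - i" using i1 by simp
    ultimately show ?thesis using phi0_le_den_exp[OF s1] ki li by (fastforce simp: den_exp_def)
  qed
qed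

lemma phi0_eq_0_above:
  assumes "1 \<le> m" "phi0 r1 r2 k l (m+1) = 0" "m + 1 \<le> a" "a \<le> r1+r2+1"
  shows "phi0 r1 r2 k l a = 0"
  using assms(3,4)
proof (induction a rule: dec_induct)
  case (step n)
  then show ?case using phi0_eq_0_Suc[of n] assms(1) by simp
qed (use assms(2) in simp)

lemma phi0_jump_at_sum_of_lengths:
  assumes m: "1 \<le> m" "m \<le> r1+r2-1"
    and phi0: "phi0 r1 r2 k l (m+1) = 0" "phi0 r1 r2 k l m \<noteq> 0"
    and p: "p \<le> r1" "1 \<le> k p" "k (p+1) = 0"
    and q: "q \<le> r2" "1 \<le> l q" "l (q+1) = 0"
  shows "m = p + q"
proof -
  have kz: "k i = 0" if "p < i" for i using k_antimono[of "p+1" i] that p by auto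
  have lz: "l i = 0" if "q < i" for i using l_antimono[of "q+1" i] that q by auto
  have s1: "1 \<le> m+1" "m+1 \<le> r1+r2+1" using m by auto
  obtain i where i: "i \<in> {diag_lo (m+1)..Suc (diag_hi (m+1))}" "k i = 0" "l (Suc (m+1) - i) = 0"
    using phi0_eq_0_obtain[OF s1 phi0(1)] .
  have i1: "1 \<le> i" "i \<le> m+1" "1 \<le> Suc (m+1) - i" using i by (auto simp: diag_lo_def diag_hi_def)
  have "p < i" using i(2) i1 k_antimono[of i p] p(2) by (cases "p < i") auto
  moreover have "q < Suc (m+1) - i" using i(3) l_antimono[of "Suc (m+1) - i" q] q(2) i1
    by (cases "q < Suc (m+1) - i") auto
  ultimately have "p + q \<le> m" using i1 by linarith
  moreover have "m \<le> p + q"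
  proof (rule ccontr)
    assume "\<not> m \<le> p + q"
    define i' where "i' = max (p+1) (m - r2)"
    have "1 \<le> m" "m \<le> r1+r2+1" using m by auto
    moreover have "i' \<in> {diag_lo m..Suc (diag_hi m)}"
      using \<open>\<not> m \<le> p + q\<close> m p by (auto simp: diag_lo_def diag_hi_def i'_def)
    moreover have "den_exp m i' = 0"
      using \<open>\<not> m \<le> p + q\<close> m q kz lz by (auto simp: den_exp_def i'_def)
    ultimately show False using phi0_le_den_exp phi0(2) by fastforce
  qed
  ultimately show ?thesis by simp
qed

lemma PC0_poly_zero_below_jump:
  assumes m: "1 \<le> m" "m \<le> r1+r2-1"
    and phi0: "phi0 r1 r2 k l (m+1) = 0" "phi0 r1 r2 k l m \<noteq> 0"
    and kl: "k 1 * l 1 \<noteq> 0" and zero: "PC0_poly (complex_of_real x) = 0"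
  shows "x \<le> d / 2 * (real m - 1) - 1"
proof -
  obtain p where p: "1 \<le> p" "p \<le> r1" "k p \<noteq> 0" "k (p+1) = 0"
    using ex_last_nonzero[of k r1] kl r1 k_ext by auto
  obtain q where q: "1 \<le> q" "q \<le> r2" "l q \<noteq> 0" "l (q+1) = 0"
    using ex_last_nonzero[of l r2] kl r2 l_ext by auto
  have "m = p + q" using phi0_jump_at_sum_of_lengths[OF m phi0] p q by simp
  moreover have "complex_of_real x \<in> complex_of_real ` {d / 2 * real (max 1 1) - real (k 1 + l 1) + 1 ..
                              d / 2 * (real (p + q) - 1) - real (max (k p) (l q))}"
    using PC0_poly_zero_in_interval[OF zero, of 1 1 p q] p q by simp
  then have "x \<le> d / 2 * (real (p + q) - 1) - real (max (k p) (l q))" by auto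
  moreover have "1 \<le> real (max (k p) (l q))" using p by simp
  ultimately show ?thesis by simp
qed

lemma PC0_poly_nonzero_above_jump:
  assumes "1 \<le> m" "m \<le> r1+r2-1"
    and "phi0 r1 r2 k l (m+1) = 0" "phi0 r1 r2 k l m \<noteq> 0"
    and "d / 2 * (real m - 1) - 1 < x"
  shows "PC0_poly (complex_of_real x) \<noteq> 0"
  using PC0_poly_nonzero_if_k1_l1_0 PC0_poly_zero_below_jump[OF assms(1-4)] assms(5) by fastforce

lemma PC0_zeros_subset_interval:
  assumes "\<forall>i\<in>{1..m1'}. k i = k 1" "\<forall>j\<in>{1..m1''}. l j = l 1"
    and "k (m2' + 1) = 0" "l (m2'' + 1) = 0"
  shows "{lam. (PC0 d r1 r2 k l \<longlongrightarrow> 0) (at lam)} \<subseteq>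
           complex_of_real ` {d / 2 * real (max m1' m1'') - real (k 1 + l 1) + 1 ..
                              d / 2 * (real (m2' + m2'') - 1) - real (max (k m2') (l m2''))}"
  using PC0_tendsto_0_imp_PC0_poly_eq_0 PC0_poly_zero_in_interval[OF _ assms] by blast

lemma PC0_zeros_empty: "k 1 * l 1 = 0 \<Longrightarrow> {lam. (PC0 d r1 r2 k l \<longlongrightarrow> 0) (at lam)} = {}"
  using PC0_tendsto_0_imp_PC0_poly_eq_0 PC0_poly_nonzero_if_k1_l1_0 by blast

lemma C0_regular_nonzero_at_jump:
  assumes "m \<in> {1..r1+r2-1}"
    and phi0: "phi0 r1 r2 k l (m+1) = 0" "phi0 r1 r2 k l m \<noteq> 0"
  defines "x \<equiv> complex_of_real (d / 2 * real m)"
  shows "\<exists>g. g analytic_on {x} \<and> g x \<noteq> 0 \<and> (\<forall>\<^sub>F w in at x. C0 d r1 r2 k l w = g w)"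
proof (intro exI conjI)
  have m: "1 \<le> m" "m \<le> r1+r2-1" using assms(1) by auto
  let ?P = "poch_d d (r1 + r2) (phi0 r1 r2 k l)"
  have "\<forall>j\<in>{m<..r1+r2}. phi0 r1 r2 k l j = 0"
    using phi0_eq_0_above[OF m(1) phi0(1)] by simp
  then have "?P x \<noteq> 0" unfolding x_def by (rule poch_d_nonzero_at_shift[OF d_pos])
  then show "(\<lambda>w. PC0_poly w / ?P w) analytic_on {x}"
    by (intro analytic_on_divide PC0_poly_analytic poch_d_analytic) auto
  have "PC0_poly x \<noteq> 0"
    unfolding x_def
    by (rule PC0_poly_nonzero_above_jump[OF m phi0]) (use d_pos in \<open>simp add: algebra_simps\<close>)
  with \<open>?P x \<noteq> 0\<close> show "PC0_poly x / ?P x \<noteq> 0" by simp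
  show "\<forall>\<^sub>F w in at x. C0 d r1 r2 k l w = PC0_poly w / ?P w"
    by (rule eventually_C0_eq_quotient)
qed

lemma C0_pole_at_jump:
  assumes "m \<in> {1..r1+r2-1}"
    and phi0: "phi0 r1 r2 k l (m+1) = 0" "phi0 r1 r2 k l m \<noteq> 0"
  defines "x \<equiv> complex_of_real (d / 2 * (real m - 1))"
  shows "is_pole (C0 d r1 r2 k l) x"
proof -
  have m: "1 \<le> m" "m \<le> r1+r2-1" using assms(1) by auto
  let ?P = "poch_d d (r1 + r2) (phi0 r1 r2 k l)"
  have "?P x = 0" unfolding x_def using m phi0 by (intro poch_d_eq_0_at_shift) auto
  moreover have "eventually (\<lambda>w. ?P w \<noteq> 0) (at x)"
    using eventually_C0_den_nonzero by (rule eventually_mono) (simp add: C0_den_eq)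
  moreover have "isCont ?P x" by (rule analytic_at_imp_isCont[OF poch_d_analytic])
  ultimately have "filterlim ?P (at 0) (at x)"
    by (intro filterlim_atI) (auto simp: isCont_def)
  moreover have "PC0_poly x \<noteq> 0"
    unfolding x_def by (rule PC0_poly_nonzero_above_jump[OF m phi0]) simp
  ultimately have "filterlim (\<lambda>w. PC0_poly w / ?P w) at_infinity (at x)"
    using filterlim_divide_at_infinity[OF PC0_poly_tendsto] by simp
  then show ?thesis
    unfolding is_pole_def using filterlim_cong[OF refl refl eventually_C0_eq_quotient] by simp
qed

end

theorem proposition5p5:
  fixes d :: real and r1 r2 :: nat and k l :: "nat \<Rightarrow> nat"
  assumes d_pos: "d > 0"
    and r1: "r1 \<ge> 1" and r2: "r2 \<ge> 1"
    and k_mono: "\<forall>i j. 1 \<le> i \<and> i \<le> j \<and> j \<le> r1 \<longrightarrow> k j \<le> k i"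
    and l_mono: "\<forall>i j. 1 \<le> i \<and> i \<le> j \<and> j \<le> r2 \<longrightarrow> l j \<le> l i"
    and k_ext: "\<forall>i>r1. k i = 0"
    and l_ext: "\<forall>j>r2. l j = 0"
  shows
    "(\<forall>m1' m2' m1'' m2''.
        1 \<le> m1' \<and> m1' \<le> m2' \<and> m2' \<le> r1 \<and>
        1 \<le> m1'' \<and> m1'' \<le> m2'' \<and> m2'' \<le> r2 \<and>
        (\<forall>i\<in>{1..m1'}. k i = k 1) \<and> (\<forall>j\<in>{1..m1''}. l j = l 1) \<and>
        k (m2' + 1) = 0 \<and> l (m2'' + 1) = 0 \<longrightarrow>
        (k 1 * l 1 \<ge> 1 \<longrightarrow>
           {lam. (PC0 d r1 r2 k l \<longlongrightarrow> 0) (at lam)} \<subseteq>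
           complex_of_real ` {d / 2 * real (max m1' m1'') - real (k 1 + l 1) + 1 ..
                              d / 2 * (real (m2' + m2'') - 1) - real (max (k m2') (l m2''))}) \<and>
        (k 1 * l 1 = 0 \<longrightarrow> {lam. (PC0 d r1 r2 k l \<longlongrightarrow> 0) (at lam)} = {}))
     \<and>
     (\<forall>m\<in>{1..r1 + r2 - 1}.
        phi0 r1 r2 k l (m + 1) = 0 \<and> phi0 r1 r2 k l m \<noteq> 0 \<longrightarrow>
          (\<exists>g. g analytic_on {complex_of_real (d / 2 * real m)} \<and>
               g (complex_of_real (d / 2 * real m)) \<noteq> 0 \<and>
               (\<forall>\<^sub>F w in at (complex_of_real (d / 2 * real m)). C0 d r1 r2 k l w = g w)) \<and>
          is_pole (C0 d r1 r2 k l) (complex_of_real (d / 2 * (real m - 1))))"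
proof -
  interpret C0_data d r1 r2 k l using assms by unfold_locales
  show ?thesis
    by (intro conjI allI impI ballI; elim conjE)
       (assumption | rule PC0_zeros_subset_interval PC0_zeros_empty C0_regular_nonzero_at_jump
          C0_pole_at_jump)+
qed

end
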